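(* Let $J$ be a $k$-graph on a vertex set $V$ and $M$ a perfect matching in $J$. Let $b,c,c' \in \mathbb N$ and $u, v \in V$ be such that $(J, M)$ contains a $b$-fold $(u,v)$-transferral of size $c$, and $(J, M)$ contains a simple $(v,u)$-transferral of size $c'$. Then $(J, M)$ contains a simple $(u,v)$-transferral of size $(b-1)c'+c$.
   Context: For $S\subseteq V$, $\chi(S)\in\mathbb R^{V}$ is its characteristic vector, and for a multiset $T$ of subsets, $\chi(T)=\sum_{e\in T}\chi(e)$ (with multiplicity). For $b\in\mathbb N$ and $u,v\in V$, a $b$-fold $(u,v)$-transferral in $(J,M)$ is a pair $(T,T')$ where $T$ is a multiset of edges of $J$ and $T'$ a multiset of edges of $M$ with $\chi(T)-\chi(T')=b(\chi(\{u\})-\chi(\{v\}))$; then $|T|=|T'|$, and this common value is its size. A simple transferral is a $1$-fold transferral. *)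

theory Defs
  imports Main "HOL-Library.Multiset"
begin

definition k_graph :: "nat \<Rightarrow> 'a set \<Rightarrow> 'a set set \<Rightarrow> bool" where
  "k_graph k V J \<longleftrightarrow> (\<forall>e\<in>J. e \<subseteq> V \<and> card e = k)"

definition perfect_matching :: "'a set \<Rightarrow> 'a set set \<Rightarrow> 'a set set \<Rightarrow> bool" where
  "perfect_matching V J M \<longleftrightarrow> M \<subseteq> J \<and> (\<forall>e\<in>M. \<forall>f\<in>M. e \<noteq> f \<longrightarrow> e \<inter> f = {}) \<and> \<Union>M = V"

definition chi :: "'a set \<Rightarrow> 'a \<Rightarrow> int" where
  "chi S x = (if x \<in> S then 1 else 0)"

definition chi_ms :: "'a set multiset \<Rightarrow> 'a \<Rightarrow> int" where
  "chi_ms T x = (\<Sum>e\<in>#T. chi e x)"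

definition transferral ::
  "'a set \<Rightarrow> 'a set set \<Rightarrow> 'a set set \<Rightarrow> nat \<Rightarrow> 'a \<Rightarrow> 'a \<Rightarrow> 'a set multiset \<Rightarrow> 'a set multiset \<Rightarrow> bool" where
  "transferral V J M b u v T T' \<longleftrightarrow>
     set_mset T \<subseteq> J \<and> set_mset T' \<subseteq> M \<and>
     (\<forall>x\<in>V. chi_ms T x - chi_ms T' x = int b * (chi {u} x - chi {v} x))"

definition has_transferral ::
  "'a set \<Rightarrow> 'a set set \<Rightarrow> 'a set set \<Rightarrow> nat \<Rightarrow> 'a \<Rightarrow> 'a \<Rightarrow> nat \<Rightarrow> bool" where
  "has_transferral V J M b u v c \<longleftrightarrow>
     (\<exists>T T'. transferral V J M b u v T T' \<and> size T = c)"

end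

theory Submission
  imports Defs
begin

text \<open>Transferrals add: \<open>\<chi>\<close> is additive on multisets of edges, so sums and multiples of
  transferrals are again transferrals, with the folds adding up. A simple \<open>(u,v)\<close>-transferral
  is obtained from the \<open>b\<close>-fold one by adding \<open>b - 1\<close> copies of the simple \<open>(v,u)\<close>-transferral.\<close>

lemma chi_ms_union: "chi_ms (A + B) x = chi_ms A x + chi_ms B x"
  by (simp add: chi_ms_def)

lemma chi_ms_repeat_mset: "chi_ms (repeat_mset n A) x = int n * chi_ms A x"
  by (induction n) (simp_all add: chi_ms_def algebra_simps)

lemma set_mset_repeat_mset_subset: "set_mset (repeat_mset n A) \<subseteq> set_mset A"
  by (induction n) auto

lemma transferral_repeat:
  assumes "transferral V J M b u v T T'"
  shows "transferral V J M (n * b) u v (repeat_mset n T) (repeat_mset n T')"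
  using assms set_mset_repeat_mset_subset[of n T] set_mset_repeat_mset_subset[of n T']
  unfolding transferral_def chi_ms_repeat_mset
  by (auto simp: right_diff_distrib[symmetric])

lemma transferral_add_reverse:
  assumes "transferral V J M b u v T T'"
    and "transferral V J M d v u S S'"
    and "d \<le> b"
  shows "transferral V J M (b - d) u v (T + S) (T' + S')"
  unfolding transferral_def
proof (intro conjI ballI)
  show "set_mset (T + S) \<subseteq> J" "set_mset (T' + S') \<subseteq> M"
    using assms(1,2) unfolding transferral_def by auto
next
  fix x assume "x \<in> V"
  then have "chi_ms T x - chi_ms T' x = int b * (chi {u} x - chi {v} x)"
    and "chi_ms S x - chi_ms S' x = int d * (chi {v} x - chi {u} x)"
    using assms(1,2) unfolding transferral_def by blast+
  then show "chi_ms (T + S) x - chi_ms (T' + S') x = int (b - d) * (chi {u} x - chi {v} x)"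
    using assms(3) by (simp add: chi_ms_union of_nat_diff algebra_simps)
qed

theorem lemma4p4:
  fixes V :: "'a set" and J M :: "'a set set" and k b c c' :: nat and u v :: 'a
  assumes "finite V"
    and "k_graph k V J"
    and "perfect_matching V J M"
    and "u \<in> V" and "v \<in> V"
    and "b \<ge> 1"
    and "has_transferral V J M b u v c"
    and "has_transferral V J M 1 v u c'"
  shows "has_transferral V J M 1 u v ((b - 1) * c' + c)"
proof -
  obtain T T' where T: "transferral V J M b u v T T'" "size T = c"
    using assms(7) unfolding has_transferral_def by blast
  obtain S S' where S: "transferral V J M 1 v u S S'" "size S = c'"
    using assms(8) unfolding has_transferral_def by blast
  have "transferral V J M (b - 1) v u (repeat_mset (b - 1) S) (repeat_mset (b - 1) S')"
    using transferral_repeat[OF S(1), of "b - 1"] by simp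
  from transferral_add_reverse[OF T(1) this]
  have "transferral V J M 1 u v (T + repeat_mset (b - 1) S) (T' + repeat_mset (b - 1) S')"
    using assms(6) by simp
  moreover have "size (T + repeat_mset (b - 1) S) = (b - 1) * c' + c"
    using T(2) S(2) by simp
  ultimately show ?thesis
    unfolding has_transferral_def by blast
qed

end
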